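(* Let $n$ be one of the integers for which $\mathbb{Z}[\xi_n]$ has class number one, $\mathcal{M}_n=\mathbb{Z}[\xi_n]$, and $I$ a principal ideal of $\mathcal{M}_n$ of finite index. Let $S$ be a $\varphi(n)\times\varphi(n)$ integer matrix whose columns form a generating set of the sublattice $L$ representing $I$, and let $B$ be the matrix representing $\phi_2$, both with respect to the basis $\{1,\xi_n,\dots,\xi_n^{\varphi(n)-1}\}$. For the Bravais coloring of $\mathcal{M}_n$ determined by $I$, the color symmetry group satisfies $H=T(G)\rtimes D_N$ if and only if $S^{-1}BS$ is an integral matrix.
   Context: Standing assumption: $n\in\{3,4,5,7,8,9,11,12,13,15,16,17,19,20,21,24,25,27,28,32,33,35,36,40,44,45,48,60,84\}$ (the values for which $\mathcal{M}_n=\mathbb{Z}[\xi_n]$, $\xi_n=\exp(2\pi i/n)$, is a principal ideal domain). Let $\varphi$ be Euler's function and $N=n$ if $n$ is even, $N=2n$ if $n$ is odd. Using the $\mathbb{Z}$-basis $\{1,\xi_n,\dots,\xi_n^{\varphi(n)-1}\}$ of $\mathcal{M}_n$, each element is identified with its integer coordinate vector, so $\mathcal{M}_n$ becomes a lattice $\Lambda=\mathbb{Z}^{\varphi(n)}\subset\mathbb{R}^{\varphi(n)}$, and a principal ideal $I$ of index $\ell$ becomes a sublattice $L\subseteq\Lambda$ of index $\ell$. Let $\phi_1$ be the linear map of $\mathbb{R}^{\varphi(n)}$ induced by multiplication by $\exp(2\pi i/N)$ (an $N$-fold rotation) and $\phi_2$ the linear map induced by complex conjugation (a reflection); they generate a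 group $D_N$, dihedral of order $2N$. Let $T(G)=\{t_y: x\mapsto x+y \mid y\in\Lambda\}$. The symmetry group of $\Lambda$ is $G=T(G)\rtimes D_N$. The Bravais coloring determined by $I$ assigns to each element of $\Lambda$ one of $\ell$ colors, two elements getting the same color iff they lie in the same coset of $L$ in $\Lambda$. The color symmetry group $H$ is the set of $g\in G$ that permute the colors, i.e. for every coset $x+L$ the image $g(x+L)$ is again a coset of $L$. *)

theory Defs
  imports Complex_Main "HOL-Number_Theory.Totient" "Jordan_Normal_Form.Gauss_Jordan_Elimination"
begin

definition pid_cyclotomic_indices :: "nat set" where
  "pid_cyclotomic_indices = {3,4,5,7,8,9,11,12,13,15,16,17,19,20,21,24,25,27,28,32,33,35,36,40,44,45,48,60,84}"

definition xi :: "nat \<Rightarrow> complex" where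
  "xi n = cis (2 * pi / real n)"

definition NN :: "nat \<Rightarrow> nat" where
  "NN n = (if even n then n else 2 * n)"

definition zetaN :: "nat \<Rightarrow> complex" where
  "zetaN n = cis (2 * pi / real (NN n))"

definition Lam :: "nat \<Rightarrow> int vec set" where
  "Lam n = carrier_vec (totient n)"

definition emb :: "nat \<Rightarrow> int vec \<Rightarrow> complex" where
  "emb n v = (\<Sum>k<totient n. of_int (v $ k) * xi n ^ k)"

definition Mring :: "nat \<Rightarrow> complex set" where
  "Mring n = emb n ` Lam n"

definition coords :: "nat \<Rightarrow> complex \<Rightarrow> int vec" where
  "coords n z = (THE v. v \<in> Lam n \<and> emb n v = z)"

definition phi1_mat :: "nat \<Rightarrow> int mat" where
  "phi1_mat n = mat (totient n) (totient n) (\<lambda>(i,k). coords n (zetaN n * xi n ^ k) $ i)"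

definition phi2_mat :: "nat \<Rightarrow> int mat" where
  "phi2_mat n = mat (totient n) (totient n) (\<lambda>(i,k). coords n (cnj (xi n ^ k)) $ i)"

text \<open>The group D_N generated by phi_1 and phi_2 (finite order, so the generated monoid is the group).\<close>
inductive_set DN :: "nat \<Rightarrow> int mat set" for n where
  one: "1\<^sub>m (totient n) \<in> DN n"
| rot: "A \<in> DN n \<Longrightarrow> phi1_mat n * A \<in> DN n"
| refl: "A \<in> DN n \<Longrightarrow> phi2_mat n * A \<in> DN n"

definition symG :: "nat \<Rightarrow> (int vec \<Rightarrow> int vec) set" where
  "symG n = {(\<lambda>x. A *\<^sub>v x + y) | A y. A \<in> DN n \<and> y \<in> Lam n}"

definition coset :: "int vec set \<Rightarrow> int vec \<Rightarrow> int vec set" where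
  "coset L x = {x + l | l. l \<in> L}"

definition colorH :: "nat \<Rightarrow> int vec set \<Rightarrow> (int vec \<Rightarrow> int vec) set" where
  "colorH n L = {g \<in> symG n. \<forall>x \<in> Lam n. \<exists>x' \<in> Lam n. g ` coset L x = coset L x'}"

end

theory Submission
  imports Defs "Berlekamp_Zassenhaus.Factor_Bound"
begin

text \<open>
  The coordinates with respect to \<open>1, \<xi>, \<dots>, \<xi>^(\<phi>(n) - 1)\<close> are well defined because the
  minimal polynomial of \<open>\<xi> = \<xi>\<^sub>n\<close> over \<open>\<int>\<close> has degree \<open>\<phi>(n)\<close> and unit leading coefficient. Its
  degree is settled by the classical Frobenius argument (\<open>\<xi>\<^sup>p\<close> is a conjugate of \<open>\<xi>\<close> for every prime
  \<open>p \<nmid> n\<close>), carried out directly in \<open>\<int>[x]\<close> modulo \<open>p\<close>.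

  Multiplication by \<open>exp(2\<pi>i/N)\<close> maps \<open>\<alpha>\<int>[\<xi>]\<close> onto itself, so the rotation \<open>\<phi>\<^sub>1\<close> maps the
  lattice \<open>L\<close> onto \<open>L\<close>. Hence every element of \<open>T(G) \<rtimes> D\<^sub>N\<close> permutes the cosets of \<open>L\<close> as soon
  as the reflection \<open>\<phi>\<^sub>2\<close> maps \<open>L\<close> into itself, and conversely a colour permuting \<open>\<phi>\<^sub>2\<close> fixes
  \<open>0\<close> and therefore fixes the coset \<open>L\<close>. Since \<open>L\<close> is spanned by the columns of \<open>S\<close>, \<open>\<phi>\<^sub>2 L \<subseteq> L\<close>
  means \<open>B S = S T\<close> for an integral \<open>T\<close>, and finite index gives \<open>det S \<noteq> 0\<close>, so that \<open>T = S\<^sup>-\<^sup>1 B S\<close>.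
\<close>

(* Unique_Factorization, imported via Factor_Bound, declares a second coprime that would
   shadow the one used by totatives. *)
hide_const (open) comm_monoid_mult_class.coprime

section \<open>Irreducible factors of \<open>x\<^sup>n - 1\<close> over \<open>\<int>\<close>\<close>

lemma prime_dvd_add_power_sub:
  fixes a b :: "'a::comm_ring_1"
  assumes p: "prime p"
  shows "of_nat p dvd (a + b) ^ p - a ^ p - b ^ p"
proof -
  have p0: "p > 0" using prime_gt_0_nat[OF p] .
  have "(a + b) ^ p = (\<Sum>k\<le>p. of_nat (p choose k) * a ^ k * b ^ (p - k))"
    by (rule binomial_ring)
  also have "\<dots> = (\<Sum>k\<in>{0<..<p}. of_nat (p choose k) * a ^ k * b ^ (p - k)) + a ^ p + b ^ p"
  proof -
    have "{..p} = insert 0 (insert p {0<..<p})" using p0 by auto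
    then show ?thesis using p0 by (simp add: algebra_simps)
  qed
  finally have "(a + b) ^ p - a ^ p - b ^ p = (\<Sum>k\<in>{0<..<p}. of_nat (p choose k) * a ^ k * b ^ (p - k))"
    by simp
  also have "of_nat p dvd \<dots>"
  proof (rule dvd_sum)
    fix k assume "k \<in> {0<..<p}"
    then have "p dvd p choose k" by (intro dvd_choose_prime p) auto
    then show "of_nat p dvd of_nat (p choose k) * a ^ k * b ^ (p - k)"
      by (auto elim!: dvdE simp: mult.assoc)
  qed
  finally show ?thesis .
qed

lemma prime_dvd_power_sub_self:
  fixes a :: int
  assumes p: "prime p"
  shows "int p dvd a ^ p - a"
proof -
  have p0: "p > 0" using prime_gt_0_nat[OF p] .
  have "int p dvd -1 - (-1) ^ p"
    using prime_dvd_add_power_sub[OF p, of 1 "-1 :: int"] p0 by (simp add: zero_power)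
  then have minus_one: "int p dvd (-1) ^ p + 1"
    by (metis dvd_minus_iff minus_diff_eq diff_minus_eq_add)
  show ?thesis
  proof (induction a rule: int_induct[where k = 0])
    case base
    show ?case using p0 by (simp add: zero_power)
  next
    case (step1 i)
    have "(i + 1) ^ p - (i + 1) = ((i + 1) ^ p - i ^ p - 1 ^ p) + (i ^ p - i)" by simp
    then show ?case using prime_dvd_add_power_sub[OF p, of i 1] step1.IH by (metis dvd_add)
  next
    case (step2 i)
    have "(i - 1) ^ p - (i - 1) = ((i + -1) ^ p - i ^ p - (-1) ^ p) + (i ^ p - i) + ((-1) ^ p + 1)" by simp
    then show ?case using prime_dvd_add_power_sub[OF p, of i "-1"] step2.IH minus_one by (metis dvd_add)
  qed
qed

lemma pCons_as_monom_mult: "pCons a g = [:a:] + monom 1 1 * (g :: 'a::comm_semiring_1 poly)"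
  by (simp add: monom_Suc monom_0)

lemma prime_dvd_power_sub_pcompose_monom:
  fixes g :: "int poly"
  assumes p: "prime p"
  shows "[:int p:] dvd g ^ p - pcompose g (monom 1 p)"
proof (induction g)
  case 0
  show ?case using prime_gt_0_nat[OF p] by (simp add: zero_power)
next
  case (pCons a g)
  let ?x = "monom 1 1 :: int poly"
  have "[:int p:] dvd ([:a:] + ?x * g) ^ p - [:a:] ^ p - (?x * g) ^ p"
    using prime_dvd_add_power_sub[OF p, of "[:a:]" "?x * g"] by (simp add: of_nat_poly)
  moreover have "[:int p:] dvd [:a:] ^ p - [:a:]"
    using prime_dvd_power_sub_self[OF p, of a] by (simp add: poly_const_pow)
  moreover have "[:int p:] dvd monom 1 p * (g ^ p - pcompose g (monom 1 p))"
    using pCons.IH by simp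
  moreover have "pCons a g ^ p - pcompose (pCons a g) (monom 1 p)
      = (([:a:] + ?x * g) ^ p - [:a:] ^ p - (?x * g) ^ p) + ([:a:] ^ p - [:a:])
        + monom 1 p * (g ^ p - pcompose g (monom 1 p))"
  proof -
    have "(?x * g) ^ p = monom 1 p * g ^ p" by (simp add: power_mult_distrib monom_power)
    moreover have "pCons a g ^ p - pcompose (pCons a g) (monom 1 p)
        = ([:a:] + ?x * g) ^ p - ([:a:] + monom 1 p * pcompose g (monom 1 p))"
      by (metis pCons_as_monom_mult pcompose_pCons)
    ultimately show ?thesis by (simp add: algebra_simps)
  qed
  ultimately show ?case by (metis dvd_add)
qed

(* Reduction modulo m keeps the leading term of f, so f * w can only be congruent to a constant
   if w is congruent to 0. *)
lemma dvd_const_if_const_poly_dvd_diff_mult: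
  fixes f w :: "int poly"
  assumes f: "is_unit (lead_coeff f)" "degree f > 0"
    and "[:m:] dvd [:c:] - f * w"
  shows "m dvd c"
  using assms(3)
proof (induction "degree w" arbitrary: w rule: less_induct)
  case less
  show ?case
  proof (cases "w = 0")
    case True
    then show ?thesis using less.prems by simp
  next
    case w: False
    define a where "a = lead_coeff w"
    define w' where "w' = w - monom a (degree w)"
    have "f \<noteq> 0" using f(2) by auto
    then have "coeff ([:c:] - f * w) (degree f + degree w) = - (lead_coeff f * a)"
      using f(2) w by (simp add: a_def coeff_pCons lead_coeff_mult degree_mult_eq split: nat.split flip: coeff_mult_degree_sum)
    moreover have "m dvd coeff ([:c:] - f * w) (degree f + degree w)"
      using less.prems const_poly_dvd_iff by blast
    ultimately have "m dvd a" using f(1) by (simp add: dvd_mult_unit_iff')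
    then have "[:m:] dvd monom a (degree w)" by (simp add: const_poly_dvd_iff coeff_monom)
    then have "[:m:] dvd f * monom a (degree w)" by (rule dvd_mult)
    moreover have "[:c:] - f * w' = ([:c:] - f * w) + f * monom a (degree w)"
      by (simp add: w'_def algebra_simps)
    ultimately have w': "[:m:] dvd [:c:] - f * w'" using less.prems by (metis dvd_add)
    show ?thesis
    proof (cases "w' = 0")
      case True
      then show ?thesis using w' by simp
    next
      case False
      have "coeff w' k = 0" if "k \<ge> degree w" for k
        using that coeff_eq_0[of w k] by (cases "k = degree w") (auto simp: w'_def a_def)
      then have "degree w' < degree w" using leading_coeff_neq_0[OF False] by (meson not_le)
      then show ?thesis using less.hyps w' by blast
    qed
  qed
qed

lemma prime_elem_dvd_of_common_root:
  fixes f h :: "int poly" and z :: complex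
  assumes f: "prime_elem f" and fz: "poly (of_int_poly f) z = 0" and hz: "poly (of_int_poly h) z = 0"
  shows "f dvd h"
proof (rule ccontr)
  assume nd: "\<not> f dvd h"
  have "is_unit (gcd f h)"
  proof -
    obtain k where fk: "f = gcd f h * k" by (metis dvdE gcd_dvd1)
    have "\<not> is_unit k"
    proof
      assume "is_unit k"
      then have "f dvd gcd f h" using fk by (metis dvd_mult_unit_iff dvd_refl)
      with nd show False by (metis dvd_trans gcd_dvd2)
    qed
    then show ?thesis using irreducibleD[OF prime_elem_imp_irreducible[OF f] fk] by blast
  qed
  then have "gcd f h = 1 \<or> gcd f h = -1"
    by (auto simp: is_unit_poly_iff zdvd1_eq abs_if split: if_splits)
  then have "gcd (of_int_poly f :: rat poly) (of_int_poly h) = 1"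
    unfolding gcd_rat_to_gcd_int by (elim disjE) (simp_all add: of_int_poly_hom.hom_uminus)
  then obtain a b where ab: "a * of_int_poly f + b * of_int_poly h = (1 :: rat poly)"
    by (metis bezout_coefficients_fst_snd)
  interpret R: map_poly_comm_ring_hom "of_rat :: rat \<Rightarrow> complex" by unfold_locales
  have "poly (map_poly of_rat (a * of_int_poly f + b * of_int_poly h)) z = 1"
    unfolding ab by simp
  then show False
    by (simp add: R.hom_add R.hom_mult map_poly_map_poly o_def fz hz)
qed

lemma lead_coeff_unit_if_dvd_xn_minus_1:
  fixes f g :: "int poly"
  assumes "f * g = monom 1 n - 1" and "n > 0"
  shows "is_unit (lead_coeff f)"
proof -
  have "degree (monom 1 n - 1 :: int poly) = n"
    using \<open>n > 0\<close> by (intro antisym degree_diff_le le_degree) (auto simp: degree_monom_le)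
  then have "lead_coeff f * lead_coeff g = 1"
    using assms by (simp flip: lead_coeff_mult)
  then show ?thesis by (metis dvdI)
qed

lemma poly_xn_minus_1: "poly (of_int_poly (monom 1 n - 1 :: int poly)) (w :: complex) = w ^ n - 1"
  by (simp add: of_int_poly_hom.hom_minus map_poly_monom poly_monom)

lemma degree_pos_if_root:
  fixes f :: "int poly"
  assumes "f \<noteq> 0" and "poly (of_int_poly f) (z :: complex) = 0"
  shows "degree f > 0"
proof (rule ccontr)
  assume "\<not> degree f > 0"
  then obtain c where "f = [:c:]" by (metis degree_eq_zeroE gr0I)
  with assms show False by simp
qed

(* The identity x (fg)' - n fg = n for fg = x^n - 1. *)
lemma xn_minus_1_bezout:
  fixes f g :: "int poly"
  assumes fg: "f * g = monom 1 n - 1" and n: "n > 0"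
  shows "[:int n:] = g * (monom 1 1 * pderiv f) + f * (monom 1 1 * pderiv g - [:int n:] * g)"
proof -
  have "pderiv f * g + f * pderiv g = monom (int n) (n - 1)"
    using arg_cong[OF fg, of pderiv] by (simp add: pderiv_mult pderiv_diff pderiv_monom mult.commute)
  then have "monom 1 1 * (pderiv f * g + f * pderiv g) = monom (int n) n"
    using n by (simp add: mult_monom)
  moreover have "[:int n:] * (f * g) = monom (int n) n - [:int n:]"
    unfolding fg by (simp add: right_diff_distrib smult_monom)
  ultimately show ?thesis by (simp add: algebra_simps)
qed

(* g(x^p) is congruent to g^p modulo p, so the p-th power of the Bezout identity n = g u + f v
   puts n^p into the ideal (f, p). *)
lemma prime_dvd_if_dvd_pcompose_cofactor:
  fixes f g :: "int poly"
  assumes fg: "f * g = monom 1 n - 1" and n: "n > 0" and f: "degree f > 0"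
    and p: "prime p" and dvd: "f dvd pcompose g (monom 1 p)"
  shows "p dvd n"
proof -
  obtain k where k: "pcompose g (monom 1 p) = f * k" using dvd by (elim dvdE)
  obtain s where s: "g ^ p - pcompose g (monom 1 p) = [:int p:] * s"
    using prime_dvd_power_sub_pcompose_monom[OF p, of g] by (elim dvdE)
  define u where "u = monom 1 1 * pderiv f"
  define v where "v = monom 1 1 * pderiv g - [:int n:] * g"
  have bez: "[:int n:] = g * u + f * v" unfolding u_def v_def by (rule xn_minus_1_bezout[OF fg n])
  obtain t where t: "[:int n:] ^ p = (g * u) ^ p + f * t"
  proof
    have "[:int n:] ^ p - (g * u) ^ p
        = ([:int n:] - g * u) * (\<Sum>i<p. (g * u) ^ (p - Suc i) * [:int n:] ^ i)"
      by (rule power_diff_sumr2)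
    also have "[:int n:] - g * u = f * v" using bez by simp
    finally show "[:int n:] ^ p = (g * u) ^ p + f * (v * (\<Sum>i<p. (g * u) ^ (p - Suc i) * [:int n:] ^ i))"
      by (simp add: mult.assoc diff_eq_eq)
  qed
  have "[:int n ^ p:] = g ^ p * u ^ p + f * t"
    by (simp only: poly_const_pow[symmetric] t power_mult_distrib)
  also have "g ^ p = f * k + [:int p:] * s"
    using s k by (simp add: eq_diff_eq)
  finally have eq: "[:int n ^ p:] - f * (t + k * u ^ p) = [:int p:] * (s * u ^ p)"
    by (simp add: algebra_simps)
  have "is_unit (lead_coeff f)" by (rule lead_coeff_unit_if_dvd_xn_minus_1[OF fg n])
  moreover have "[:int p:] dvd [:int n ^ p:] - f * (t + k * u ^ p)"
    unfolding eq by (rule dvd_triv_left)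
  ultimately have "int p dvd int n ^ p" by (rule dvd_const_if_const_poly_dvd_diff_mult[OF _ f])
  then have "p dvd n ^ p" by (simp only: Power.of_nat_power [symmetric] of_nat_dvd_iff)
  then show "p dvd n" using p by (rule prime_dvd_power[rotated])
qed

lemma prime_elem_factor_root_power_prime:
  fixes f g :: "int poly" and w :: complex
  assumes f: "prime_elem f" and fg: "f * g = monom 1 n - 1"
    and p: "prime p" "\<not> p dvd n" and fw: "poly (of_int_poly f) w = 0"
  shows "poly (of_int_poly f) (w ^ p) = 0"
proof (rule ccontr)
  assume nz: "poly (of_int_poly f) (w ^ p) \<noteq> 0"
  have n: "n > 0" using p(2) by (cases n) auto
  have "w ^ n = 1"
    using arg_cong[OF fg, of "\<lambda>q. poly (of_int_poly q) w"] fw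
    by (simp add: poly_xn_minus_1 of_int_poly_hom.hom_mult)
  then have "poly (of_int_poly (f * g)) (w ^ p) = 0"
    unfolding fg poly_xn_minus_1 by (simp flip: power_mult add: mult.commute power_mult)
  then have "poly (of_int_poly g) (w ^ p) = 0" using nz by (simp add: of_int_poly_hom.hom_mult)
  then have "poly (of_int_poly (pcompose g (monom 1 p))) w = 0"
    by (simp add: of_int_hom.map_poly_pcompose poly_pcompose map_poly_monom poly_monom)
  then have "f dvd pcompose g (monom 1 p)" by (rule prime_elem_dvd_of_common_root[OF f fw])
  moreover have "degree f > 0" using f fw by (intro degree_pos_if_root) auto
  ultimately have "p dvd n" by (intro prime_dvd_if_dvd_pcompose_cofactor[OF fg n _ p(1)])
  with p(2) show False ..
qed

lemma prime_elem_factor_root_power_coprime: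
  fixes f g :: "int poly" and w :: complex
  assumes f: "prime_elem f" and fg: "f * g = monom 1 n - 1"
    and fw: "poly (of_int_poly f) w = 0" and k: "k > 0" "coprime k n"
  shows "poly (of_int_poly f) (w ^ k) = 0"
  using k
proof (induction k rule: less_induct)
  case (less k)
  show ?case
  proof (cases "k = 1")
    case True
    then show ?thesis using fw by simp
  next
    case False
    then obtain p where p: "prime p" "p dvd k" using less.prems(1) by (metis prime_factor_nat)
    then obtain m where km: "k = p * m" by (elim dvdE)
    have "m < k" "m > 0" using km less.prems(1) prime_gt_1_nat[OF p(1)] by auto
    moreover have "coprime m n" using less.prems(2) km by simp
    ultimately have "poly (of_int_poly f) (w ^ m) = 0" by (rule less.IH)
    moreover have "\<not> p dvd n"
      using coprime_common_divisor[OF less.prems(2) p(2)] p(1) not_prime_unit by blast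
    ultimately have "poly (of_int_poly f) ((w ^ m) ^ p) = 0"
      by (intro prime_elem_factor_root_power_prime[OF f fg p(1)])
    then show ?thesis by (simp add: km power_mult mult.commute)
  qed
qed

section \<open>Powers of \<open>\<xi>\<^sub>n\<close> and its minimal polynomial\<close>

lemma xi_power: "xi n ^ k = cis (2 * pi * real k / real n)"
  unfolding xi_def DeMoivre by (simp add: field_simps)

lemma bij_betw_xi_power: "n > 0 \<Longrightarrow> bij_betw (\<lambda>k. xi n ^ k) {..<n} {z. z ^ n = 1}"
  unfolding xi_power by (rule bij_betw_roots_unity)

lemma xi_power_n: "n > 0 \<Longrightarrow> xi n ^ n = 1"
  unfolding xi_power by simp

lemma xi_power_mod:
  assumes "n > 0"
  shows "xi n ^ k = xi n ^ (k mod n)"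
proof -
  have "xi n ^ k = xi n ^ (n * (k div n) + k mod n)" by simp
  also have "\<dots> = (xi n ^ n) ^ (k div n) * xi n ^ (k mod n)" by (simp only: power_add power_mult)
  finally show ?thesis using xi_power_n[OF assms] by simp
qed

lemma xi_power_eq_iff:
  assumes n: "n > 0"
  shows "xi n ^ a = xi n ^ b \<longleftrightarrow> a mod n = b mod n"
proof -
  have "inj_on (\<lambda>k. xi n ^ k) {..<n}" using bij_betw_xi_power[OF n] by (rule bij_betw_imp_inj_on)
  then have "xi n ^ (a mod n) = xi n ^ (b mod n) \<longleftrightarrow> a mod n = b mod n"
    using n by (auto dest: inj_onD)
  then show ?thesis by (simp flip: xi_power_mod[OF n])
qed

lemma xi_power_eq_1_iff: "n > 0 \<Longrightarrow> xi n ^ k = 1 \<longleftrightarrow> n dvd k"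
  using xi_power_eq_iff[of n k 0] by (simp add: mod_eq_0_iff_dvd)

lemma root_of_unity_eq_xi_power:
  assumes "n > 0" "z ^ n = 1"
  obtains j where "j < n" "z = xi n ^ j"
  using bij_betw_xi_power[OF assms(1)] assms(2) unfolding bij_betw_def by auto

lemma inj_on_xi_power_totatives: "inj_on (\<lambda>k. xi n ^ k) (totatives n)"
proof (rule inj_onI)
  fix a b assume a: "a \<in> totatives n" and b: "b \<in> totatives n" and "xi n ^ a = xi n ^ b"
  then have n: "n > 0" and "a mod n = b mod n" using xi_power_eq_iff by (auto simp: totatives_def)
  moreover have "k mod n = (if k = n then 0 else k)" if "k \<in> totatives n" for k
    using that by (auto simp: totatives_def)
  ultimately show "a = b" using a b by (auto simp: totatives_def split: if_splits)
qed

lemma xi_root_prime_elem_factor: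
  assumes n: "n > 0"
  obtains f g :: "int poly"
  where "prime_elem f" "f * g = monom 1 n - 1" "poly (of_int_poly f) (xi n) = 0"
proof -
  define Q :: "int poly" where "Q = monom 1 n - 1"
  define P where "P = prod_mset (prime_factorization Q)"
  have "coeff Q n = 1" using n by (simp add: Q_def)
  then have Q0: "Q \<noteq> 0" by auto
  have "Q dvd P"
  proof -
    have "normalize Q = normalize P"
      using prod_mset_prime_factorization_weak[OF Q0] unfolding P_def by simp
    then show ?thesis by (metis dvd_normalize_iff dvd_refl normalize_dvd_iff)
  qed
  then have "poly (of_int_poly P) (xi n) = 0"
    using xi_power_n[OF n] by (auto simp: Q_def of_int_poly_hom.hom_mult poly_xn_minus_1)
  then obtain p where p: "p \<in># prime_factorization Q" "poly (of_int_poly p) (xi n) = 0"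
    unfolding P_def of_int_poly_hom.hom_prod_mset poly_prod_mset prod_mset_zero_iff by auto
  have "prime_elem p" using in_prime_factors_imp_prime[OF p(1)] by (rule prime_imp_prime_elem)
  moreover obtain g where "p * g = monom 1 n - 1"
    using p(1) unfolding Q_def by (metis dvdE in_prime_factors_imp_dvd)
  ultimately show ?thesis using p(2) by (rule that)
qed

lemma rsquarefree_dvd_xn_minus_1:
  fixes F :: "complex poly"
  assumes FG: "F * G = monom 1 n - 1" and n: "n > 0"
  shows "rsquarefree F"
  unfolding rsquarefree_roots
proof (intro allI notI)
  fix a assume a: "poly F a = 0 \<and> poly (pderiv F) a = 0"
  have "poly (pderiv (F * G)) a = 0" using a by (simp add: pderiv_mult)
  then have "a = 0" using n by (simp add: FG pderiv_diff pderiv_monom poly_monom)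
  moreover have "a ^ n = 1" using arg_cong[OF FG, of "\<lambda>q. poly q a"] a by (simp add: poly_monom)
  ultimately show False using n by (simp add: zero_power)
qed

lemma coprime_if_xi_power_root:
  fixes f :: "int poly"
  assumes n: "n > 0" and f: "prime_elem f" and fxi: "poly (of_int_poly f) (xi n) = 0"
    and fk: "poly (of_int_poly f) (xi n ^ k) = 0"
  shows "coprime k n"
proof (rule ccontr)
  assume nc: "\<not> coprime k n"
  define m where "m = n div gcd k n"
  have "gcd k n > 1" using nc n by (simp add: coprime_iff_gcd_eq_1 nat_neq_iff)
  moreover have "gcd k n \<le> n" using n by simp
  ultimately have m: "m < n" "m > 0" using n by (simp_all add: m_def div_greater_zero_iff)
  obtain k' where k': "k = gcd k n * k'" by (metis dvdE gcd_dvd1)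
  have "k * m = k' * (gcd k n * m)" by (subst (1) k') (simp only: ac_simps)
  also have "gcd k n * m = n" by (simp add: m_def)
  finally have "(xi n ^ k) ^ m = 1" using n by (simp add: xi_power_eq_1_iff flip: power_mult)
  then have "f dvd monom 1 m - 1"
    by (intro prime_elem_dvd_of_common_root[OF f fk]) (simp add: poly_xn_minus_1)
  then have "poly (of_int_poly (monom 1 m - 1 :: int poly)) (xi n) = 0"
    using fxi by (auto simp: of_int_poly_hom.hom_mult)
  then have "n dvd m" using n by (simp add: poly_xn_minus_1 xi_power_eq_1_iff)
  with m show False by (simp add: nat_dvd_not_less)
qed

(* Over \<complex>, f is squarefree and its roots are exactly the primitive n-th roots of unity. *)
lemma degree_xi_root_prime_elem_factor:
  fixes f g :: "int poly"
  assumes n: "n > 0" and f: "prime_elem f" and fg: "f * g = monom 1 n - 1"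
    and fxi: "poly (of_int_poly f) (xi n) = 0"
  shows "degree f = totient n"
proof -
  define F :: "complex poly" where "F = of_int_poly f"
  have F0: "F \<noteq> 0" using f by (auto simp: F_def)
  have FG: "F * of_int_poly g = monom 1 n - 1"
    by (simp add: F_def fg of_int_poly_hom.hom_minus map_poly_monom flip: of_int_poly_hom.hom_mult)
  have "{z. poly F z = 0} = (\<lambda>k. xi n ^ k) ` totatives n"
  proof
    show "(\<lambda>k. xi n ^ k) ` totatives n \<subseteq> {z. poly F z = 0}"
      using prime_elem_factor_root_power_coprime[OF f fg fxi] by (auto simp: F_def totatives_def)
    show "{z. poly F z = 0} \<subseteq> (\<lambda>k. xi n ^ k) ` totatives n"
    proof
      fix z assume "z \<in> {z. poly F z = 0}"
      then have Fz: "poly F z = 0" by simp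
      then have "z ^ n = 1" using arg_cong[OF FG, of "\<lambda>q. poly q z"] by (simp add: poly_monom)
      then obtain j where j: "j < n" "z = xi n ^ j" using root_of_unity_eq_xi_power[OF n] by blast
      define k where "k = (if j = 0 then n else j)"
      have zk: "z = xi n ^ k" using j xi_power_n[OF n] by (simp add: k_def)
      then have "coprime k n" using coprime_if_xi_power_root[OF n f fxi] Fz by (simp add: F_def)
      moreover have "k \<in> {0<..n}" using j n by (auto simp: k_def)
      ultimately show "z \<in> (\<lambda>k. xi n ^ k) ` totatives n" using zk by (auto simp: totatives_def)
    qed
  qed
  then have roots: "card {z. poly F z = 0} = totient n"
    using inj_on_xi_power_totatives by (simp add: card_image totient_def)
  have "degree f = card {z. poly F z = 0}"
    using rsquarefree_card_degree[OF F0] rsquarefree_dvd_xn_minus_1[OF FG n] by (simp add: F_def)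
  then show ?thesis using roots by simp
qed

section \<open>The integral basis of \<open>\<int>[\<xi>\<^sub>n]\<close>\<close>

lemma Mring_sumI: "(\<Sum>k<totient n. of_int (c k) * xi n ^ k) \<in> Mring n"
proof -
  have "emb n (vec (totient n) c) = (\<Sum>k<totient n. of_int (c k) * xi n ^ k)"
    unfolding emb_def by (intro sum.cong) auto
  moreover have "vec (totient n) c \<in> Lam n" unfolding Lam_def by simp
  ultimately show ?thesis unfolding Mring_def by (metis image_eqI)
qed

lemma MringE:
  assumes "z \<in> Mring n"
  obtains c where "z = (\<Sum>k<totient n. of_int (c k) * xi n ^ k)"
  using assms unfolding Mring_def emb_def by blast

lemma Mring_add: "a \<in> Mring n \<Longrightarrow> b \<in> Mring n \<Longrightarrow> a + b \<in> Mring n"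
proof -
  assume "a \<in> Mring n" "b \<in> Mring n"
  then obtain c c' where "a = (\<Sum>k<totient n. of_int (c k) * xi n ^ k)"
    and "b = (\<Sum>k<totient n. of_int (c' k) * xi n ^ k)" by (metis MringE)
  then have "a + b = (\<Sum>k<totient n. of_int (c k + c' k) * xi n ^ k)"
    by (simp add: sum.distrib distrib_right)
  then show ?thesis using Mring_sumI[where c = "\<lambda>k. c k + c' k"] by simp
qed

lemma Mring_of_int_mult: "a \<in> Mring n \<Longrightarrow> of_int m * a \<in> Mring n"
proof -
  assume "a \<in> Mring n"
  then obtain c where "a = (\<Sum>k<totient n. of_int (c k) * xi n ^ k)" by (rule MringE)
  then have "of_int m * a = (\<Sum>k<totient n. of_int (m * c k) * xi n ^ k)"
    by (simp add: sum_distrib_left mult.assoc)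
  then show ?thesis using Mring_sumI[where c = "\<lambda>k. m * c k"] by simp
qed

lemma Mring_uminus: "a \<in> Mring n \<Longrightarrow> - a \<in> Mring n"
  using Mring_of_int_mult[of a n "-1"] by simp

lemma Mring_sum: "(\<And>i. i \<in> A \<Longrightarrow> g i \<in> Mring n) \<Longrightarrow> sum g A \<in> Mring n"
proof (induction A rule: infinite_finite_induct)
  case (infinite A)
  then show ?case using Mring_sumI[where c = "\<lambda>_. 0" and n = n] by simp
next
  case empty
  then show ?case using Mring_sumI[where c = "\<lambda>_. 0" and n = n] by simp
next
  case (insert x F)
  then show ?case by (simp add: Mring_add)
qed

lemma xi_power_totient_relation:
  assumes n: "n > 0"
  obtains u :: int and c :: "nat \<Rightarrow> int"
  where "u * u = 1" "of_int u * xi n ^ totient n = (\<Sum>k<totient n. of_int (c k) * xi n ^ k)"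
proof -
  obtain f g where f: "prime_elem f" and fg: "f * g = monom 1 n - 1"
    and fxi: "poly (of_int_poly f) (xi n) = 0"
    by (rule xi_root_prime_elem_factor[OF n])
  have df: "degree f = totient n" by (rule degree_xi_root_prime_elem_factor[OF n f fg fxi])
  have "is_unit (lead_coeff f)" by (rule lead_coeff_unit_if_dvd_xn_minus_1[OF fg n])
  then have "lead_coeff f * lead_coeff f = 1" by (auto simp: zdvd1_eq abs_if split: if_splits)
  moreover have "(\<Sum>k<totient n. of_int (coeff f k) * xi n ^ k) + of_int (lead_coeff f) * xi n ^ totient n = 0"
    using fxi by (simp add: poly_altdef df lessThan_Suc_atMost[symmetric])
  then have "of_int (lead_coeff f) * xi n ^ totient n = (\<Sum>k<totient n. of_int (- coeff f k) * xi n ^ k)"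
    by (simp add: eq_neg_iff_add_eq_0 add.commute sum_negf)
  ultimately show ?thesis by (rule that)
qed

lemma xi_power_in_Mring:
  assumes n: "n > 0"
  shows "xi n ^ m \<in> Mring n"
proof (induction m rule: less_induct)
  case (less m)
  define d where "d = totient n"
  show ?case
  proof (cases "m < d")
    case True
    have "(\<Sum>k<d. of_int (if k = m then 1 else 0) * xi n ^ k) = (\<Sum>k<d. if k = m then xi n ^ k else 0)"
      by (rule sum.cong) auto
    also have "\<dots> = xi n ^ m" using True by simp
    finally show ?thesis using Mring_sumI[where c = "\<lambda>k. if k = m then 1 else 0" and n = n]
      unfolding d_def by simp
  next
    case False
    obtain u c where u: "u * u = 1" and rel: "of_int u * xi n ^ d = (\<Sum>k<d. of_int (c k) * xi n ^ k)"
      unfolding d_def by (rule xi_power_totient_relation[OF n])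
    have "xi n ^ m = of_int u * (xi n ^ (m - d) * (of_int u * xi n ^ d))"
      using False u by (simp add: ac_simps flip: power_add of_int_mult)
    also have "\<dots> = of_int u * (\<Sum>k<d. of_int (c k) * xi n ^ (m - d + k))"
      unfolding rel by (simp add: sum_distrib_left power_add ac_simps)
    also have "\<dots> \<in> Mring n"
      using False by (intro Mring_of_int_mult Mring_sum less.IH) auto
    finally show ?thesis .
  qed
qed

lemma Mring_mult_xi_power: "n > 0 \<Longrightarrow> a \<in> Mring n \<Longrightarrow> a * xi n ^ j \<in> Mring n"
proof -
  assume n: "n > 0" and "a \<in> Mring n"
  then obtain c where "a = (\<Sum>k<totient n. of_int (c k) * xi n ^ k)" by (metis MringE)
  then have "a * xi n ^ j = (\<Sum>k<totient n. of_int (c k) * xi n ^ (k + j))"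
    by (simp add: sum_distrib_right power_add mult.assoc)
  then show ?thesis by (simp add: Mring_sum Mring_of_int_mult xi_power_in_Mring[OF n])
qed

lemma Mring_mult: "n > 0 \<Longrightarrow> a \<in> Mring n \<Longrightarrow> b \<in> Mring n \<Longrightarrow> a * b \<in> Mring n"
proof -
  assume n: "n > 0" and a: "a \<in> Mring n" and "b \<in> Mring n"
  then obtain c where "b = (\<Sum>k<totient n. of_int (c k) * xi n ^ k)" by (metis MringE)
  then have "a * b = (\<Sum>k<totient n. of_int (c k) * (a * xi n ^ k))"
    by (simp add: sum_distrib_left ac_simps)
  then show ?thesis by (simp add: Mring_sum Mring_of_int_mult Mring_mult_xi_power[OF n a])
qed

lemma cnj_xi:
  assumes n: "n > 0"
  shows "cnj (xi n) = xi n ^ (n - 1)"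
proof -
  have "xi n * xi n ^ (n - 1) = xi n ^ n" using n by (simp flip: power_Suc)
  then have "xi n * xi n ^ (n - 1) = xi n * cnj (xi n)"
    using xi_power_n[OF n] by (simp add: xi_def complex_mult_cnj)
  then show ?thesis unfolding xi_def by simp
qed

lemma Mring_cnj: "n > 0 \<Longrightarrow> a \<in> Mring n \<Longrightarrow> cnj a \<in> Mring n"
proof -
  assume n: "n > 0" and "a \<in> Mring n"
  then obtain c where "a = (\<Sum>k<totient n. of_int (c k) * xi n ^ k)" by (metis MringE)
  then have "cnj a = (\<Sum>k<totient n. of_int (c k) * xi n ^ ((n - 1) * k))"
    by (simp add: cnj_sum cnj_xi[OF n] power_mult)
  then show ?thesis by (simp add: Mring_sum Mring_of_int_mult xi_power_in_Mring[OF n])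
qed

lemma zetaN_in_Mring:
  assumes n: "n > 0"
  shows "zetaN n \<in> Mring n"
proof (cases "even n")
  case True
  then have "zetaN n = xi n ^ 1" unfolding zetaN_def xi_def NN_def by simp
  then show ?thesis using xi_power_in_Mring[OF n] by metis
next
  case False
  then obtain m where m: "n = 2 * m + 1" by (elim oddE)
  have "xi n ^ (m + 1) = cis (2 * pi * real (m + 1) / real n)" by (rule xi_power)
  also have "2 * pi * real (m + 1) / real n = pi + 2 * pi / real (NN n)"
    using False unfolding NN_def m by (simp add: field_simps)
  also have "cis (pi + 2 * pi / real (NN n)) = - zetaN n" unfolding zetaN_def by (simp flip: cis_mult)
  finally have "zetaN n = - (xi n ^ (m + 1))" by simp
  then show ?thesis using Mring_uminus[OF xi_power_in_Mring[OF n]] by metis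
qed

lemma zetaN_mult_cnj: "zetaN n * cnj (zetaN n) = 1"
  unfolding zetaN_def by (simp add: complex_mult_cnj)

lemma xi_powers_linear_independent:
  assumes n: "n > 0" and sum: "(\<Sum>j<totient n. of_int (c j) * xi n ^ j) = (0 :: complex)"
    and k: "k < totient n"
  shows "c k = 0"
proof -
  obtain f g where f: "prime_elem f" and fg: "f * g = monom 1 n - 1"
    and fxi: "poly (of_int_poly f) (xi n) = 0"
    by (rule xi_root_prime_elem_factor[OF n])
  define h :: "int poly" where "h = (\<Sum>j<totient n. monom (c j) j)"
  have ch: "coeff h j = (if j < totient n then c j else 0)" for j
    unfolding h_def coeff_sum by (simp cong: if_cong)
  have "poly (of_int_poly h) (xi n) = (\<Sum>j<totient n. of_int (c j) * xi n ^ j)"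
    unfolding h_def by (simp add: of_int_poly_hom.hom_sum map_poly_monom poly_sum poly_monom)
  then have hxi: "poly (of_int_poly h) (xi n) = 0" using sum by simp
  have "h = 0"
  proof (rule ccontr)
    assume h0: "h \<noteq> 0"
    have "totient n = degree f" by (rule degree_xi_root_prime_elem_factor[OF n f fg fxi, symmetric])
    also have "\<dots> \<le> degree h" using prime_elem_dvd_of_common_root[OF f fxi hxi] h0 by (rule dvd_imp_degree_le)
    also have "\<dots> < totient n"
      using h0 n by (intro degree_lessI) (auto simp: ch)
    finally show False by simp
  qed
  then show ?thesis using ch[of k] k by simp
qed

lemma inj_on_emb: "n > 0 \<Longrightarrow> inj_on (emb n) (Lam n)"
proof (rule inj_onI)
  fix v w assume n: "n > 0" and v: "v \<in> Lam n" and w: "w \<in> Lam n" and "emb n v = emb n w"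
  then have "(\<Sum>j<totient n. of_int (v $ j - w $ j) * xi n ^ j) = (0 :: complex)"
    unfolding emb_def by (simp add: left_diff_distrib sum_subtractf)
  then have "v $ j = w $ j" if "j < totient n" for j
    using xi_powers_linear_independent[where c = "\<lambda>j. v $ j - w $ j", OF n _ that] by simp
  then show "v = w" using v w unfolding Lam_def by (intro eq_vecI) auto
qed

lemma coords_emb: "n > 0 \<Longrightarrow> v \<in> Lam n \<Longrightarrow> coords n (emb n v) = v"
  unfolding coords_def by (rule the_equality) (auto dest: inj_onD[OF inj_on_emb])

lemma coords_in_Lam: "n > 0 \<Longrightarrow> z \<in> Mring n \<Longrightarrow> coords n z \<in> Lam n"
  unfolding Mring_def by (auto simp: coords_emb)

lemma emb_coords: "n > 0 \<Longrightarrow> z \<in> Mring n \<Longrightarrow> emb n (coords n z) = z"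
  unfolding Mring_def by (auto simp: coords_emb)

section \<open>The matrices of \<open>\<phi>\<^sub>1\<close> and \<open>\<phi>\<^sub>2\<close>\<close>

lemma emb_mult_mat_coords:
  fixes h :: "nat \<Rightarrow> complex"
  assumes n: "n > 0" and h: "\<And>k. k < totient n \<Longrightarrow> h k \<in> Mring n" and v: "v \<in> Lam n"
  shows "emb n (mat (totient n) (totient n) (\<lambda>(i, k). coords n (h k) $ i) *\<^sub>v v)
    = (\<Sum>k<totient n. of_int (v $ k) * h k)"
proof -
  define d where "d = totient n"
  define M where "M = mat d d (\<lambda>(i, k). coords n (h k) $ i)"
  have "dim_vec v = d" using v unfolding Lam_def d_def by simp
  then have Mv: "(M *\<^sub>v v) $ i = (\<Sum>k<d. coords n (h k) $ i * v $ k)" if "i < d" for i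
    using that unfolding M_def by (simp add: scalar_prod_def lessThan_atLeast0)
  have "emb n (M *\<^sub>v v) = (\<Sum>i<d. \<Sum>k<d. of_int (v $ k) * (of_int (coords n (h k) $ i) * xi n ^ i))"
    unfolding emb_def d_def[symmetric]
    by (rule sum.cong) (simp_all add: Mv sum_distrib_right sum_distrib_left mult.commute mult.left_commute)
  also have "\<dots> = (\<Sum>k<d. of_int (v $ k) * emb n (coords n (h k)))"
    unfolding emb_def d_def[symmetric] by (subst sum.swap) (simp add: sum_distrib_left)
  also have "\<dots> = (\<Sum>k<d. of_int (v $ k) * h k)"
    using emb_coords[OF n h] by (simp add: d_def)
  finally show ?thesis unfolding M_def d_def .
qed

lemma phi1_mat_carrier: "phi1_mat n \<in> carrier_mat (totient n) (totient n)"
  unfolding phi1_mat_def by (rule mat_carrier)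

lemma phi2_mat_carrier: "phi2_mat n \<in> carrier_mat (totient n) (totient n)"
  unfolding phi2_mat_def by (rule mat_carrier)

lemma mult_mat_vec_in_Lam: "A \<in> carrier_mat (totient n) (totient n) \<Longrightarrow> A *\<^sub>v v \<in> Lam n"
  unfolding Lam_def carrier_vec_def carrier_mat_def by simp

lemma emb_phi1_mat:
  assumes "n > 0" "v \<in> Lam n"
  shows "emb n (phi1_mat n *\<^sub>v v) = zetaN n * emb n v"
proof -
  have "emb n (phi1_mat n *\<^sub>v v) = (\<Sum>k<totient n. of_int (v $ k) * (zetaN n * xi n ^ k))"
    unfolding phi1_mat_def
    by (rule emb_mult_mat_coords[OF assms(1) _ assms(2)])
      (intro Mring_mult zetaN_in_Mring xi_power_in_Mring assms(1))
  then show ?thesis by (simp add: emb_def sum_distrib_left ac_simps)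
qed

lemma emb_phi2_mat:
  assumes "n > 0" "v \<in> Lam n"
  shows "emb n (phi2_mat n *\<^sub>v v) = cnj (emb n v)"
proof -
  have "emb n (phi2_mat n *\<^sub>v v) = (\<Sum>k<totient n. of_int (v $ k) * cnj (xi n ^ k))"
    unfolding phi2_mat_def
    by (rule emb_mult_mat_coords[OF assms(1) _ assms(2)]) (intro Mring_cnj xi_power_in_Mring assms(1))
  then show ?thesis by (simp add: emb_def)
qed

lemma phi2_mat_involution:
  assumes n: "n > 0" and v: "v \<in> Lam n"
  shows "phi2_mat n *\<^sub>v (phi2_mat n *\<^sub>v v) = v"
proof -
  have Bv: "phi2_mat n *\<^sub>v v \<in> Lam n" by (rule mult_mat_vec_in_Lam[OF phi2_mat_carrier])
  have "emb n (phi2_mat n *\<^sub>v (phi2_mat n *\<^sub>v v)) = emb n v"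
    by (simp add: emb_phi2_mat[OF n v] emb_phi2_mat[OF n Bv])
  then show ?thesis
    by (rule inj_onD[OF inj_on_emb[OF n] _ mult_mat_vec_in_Lam[OF phi2_mat_carrier] v])
qed

lemma zetaN_mult_in_ideal_iff:
  assumes n: "n > 0"
  shows "zetaN n * z \<in> (\<lambda>m. \<alpha> * m) ` Mring n \<longleftrightarrow> z \<in> (\<lambda>m. \<alpha> * m) ` Mring n"
proof
  assume "zetaN n * z \<in> (\<lambda>m. \<alpha> * m) ` Mring n"
  then obtain m where m: "m \<in> Mring n" "zetaN n * z = \<alpha> * m" by auto
  have "z = \<alpha> * (cnj (zetaN n) * m)"
    using arg_cong[OF m(2), of "\<lambda>x. cnj (zetaN n) * x"] zetaN_mult_cnj[of n]
    by (simp add: ac_simps)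
  moreover have "cnj (zetaN n) * m \<in> Mring n"
    by (rule Mring_mult[OF n Mring_cnj[OF n zetaN_in_Mring[OF n]] m(1)])
  ultimately show "z \<in> (\<lambda>m. \<alpha> * m) ` Mring n" by (rule image_eqI)
next
  assume "z \<in> (\<lambda>m. \<alpha> * m) ` Mring n"
  then obtain m where m: "m \<in> Mring n" "z = \<alpha> * m" by auto
  then have "zetaN n * z = \<alpha> * (zetaN n * m)" by simp
  moreover have "zetaN n * m \<in> Mring n" by (rule Mring_mult[OF n zetaN_in_Mring[OF n] m(1)])
  ultimately show "zetaN n * z \<in> (\<lambda>m. \<alpha> * m) ` Mring n" by (rule image_eqI)
qed

lemma phi1_mat_surj_Lam:
  assumes n: "n > 0" and v: "v \<in> Lam n"
  obtains u where "u \<in> Lam n" "phi1_mat n *\<^sub>v u = v"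
proof
  have "emb n v \<in> Mring n" using v unfolding Mring_def by (rule imageI)
  then have z: "cnj (zetaN n) * emb n v \<in> Mring n"
    by (rule Mring_mult[OF n Mring_cnj[OF n zetaN_in_Mring[OF n]]])
  show u: "coords n (cnj (zetaN n) * emb n v) \<in> Lam n" by (rule coords_in_Lam[OF n z])
  have "emb n (phi1_mat n *\<^sub>v coords n (cnj (zetaN n) * emb n v)) = emb n v"
    using zetaN_mult_cnj[of n] by (simp add: emb_phi1_mat[OF n u] emb_coords[OF n z] mult.assoc[symmetric])
  then show "phi1_mat n *\<^sub>v coords n (cnj (zetaN n) * emb n v) = v"
    by (rule inj_onD[OF inj_on_emb[OF n] _ mult_mat_vec_in_Lam[OF phi1_mat_carrier] v])
qed

lemma phi1_mat_image_ideal_lattice: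
  fixes \<alpha> :: complex
  assumes n: "n > 0"
  defines "L \<equiv> {v \<in> Lam n. emb n v \<in> (\<lambda>m. \<alpha> * m) ` Mring n}"
  shows "(*\<^sub>v) (phi1_mat n) ` L = L"
proof
  show "(*\<^sub>v) (phi1_mat n) ` L \<subseteq> L"
    using mult_mat_vec_in_Lam[OF phi1_mat_carrier] zetaN_mult_in_ideal_iff[OF n]
    by (auto simp: L_def emb_phi1_mat[OF n])
  show "L \<subseteq> (*\<^sub>v) (phi1_mat n) ` L"
  proof
    fix v assume v: "v \<in> L"
    then obtain u where u: "u \<in> Lam n" "phi1_mat n *\<^sub>v u = v"
      using phi1_mat_surj_Lam[OF n] unfolding L_def by blast
    have "emb n (phi1_mat n *\<^sub>v u) \<in> (\<lambda>m. \<alpha> * m) ` Mring n" using v unfolding L_def u(2) by simp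
    then have "u \<in> L"
      unfolding L_def emb_phi1_mat[OF n u(1)] zetaN_mult_in_ideal_iff[OF n] using u(1) by simp
    with u(2) show "v \<in> (*\<^sub>v) (phi1_mat n) ` L" by blast
  qed
qed

section \<open>Sublattices and colour symmetries\<close>

lemma col_eq_mult_mat_vec_unit_vec:
  fixes S :: "'a::semiring_1 mat"
  assumes S: "S \<in> carrier_mat d d" and k: "k < d"
  shows "col S k = S *\<^sub>v unit_vec d k"
  using col_mult2[OF S one_carrier_mat k] right_mult_one_mat[OF S] k by simp

lemma column_lattice_subset: "S \<in> carrier_mat d d \<Longrightarrow> {S *\<^sub>v c | c. c \<in> carrier_vec d} \<subseteq> carrier_vec d"
  by auto

lemma zero_in_column_lattice: "S \<in> carrier_mat d d \<Longrightarrow> 0\<^sub>v d \<in> {S *\<^sub>v c | c. c \<in> carrier_vec d}"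
  by (auto intro!: exI[of _ "0\<^sub>v d"])

lemma diff_in_column_lattice:
  fixes S :: "'a::comm_ring_1 mat"
  assumes S: "S \<in> carrier_mat d d"
    and "a \<in> {S *\<^sub>v c | c. c \<in> carrier_vec d}" "b \<in> {S *\<^sub>v c | c. c \<in> carrier_vec d}"
  shows "a - b \<in> {S *\<^sub>v c | c. c \<in> carrier_vec d}"
proof -
  obtain x y where xy: "x \<in> carrier_vec d" "y \<in> carrier_vec d" "a = S *\<^sub>v x" "b = S *\<^sub>v y"
    using assms(2,3) by auto
  then have "a - b = S *\<^sub>v (x - y)" using mult_minus_distrib_mat_vec[OF S] by simp
  then show ?thesis using xy by auto
qed

lemma column_lattice_stable_iff:
  fixes S B :: "int mat"
  assumes S: "S \<in> carrier_mat d d" and B: "B \<in> carrier_mat d d"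
    and L: "L = {S *\<^sub>v c | c. c \<in> carrier_vec d}"
  shows "(\<forall>v\<in>L. B *\<^sub>v v \<in> L) \<longleftrightarrow> (\<exists>T \<in> carrier_mat d d. B * S = S * T)"
proof
  assume stable: "\<forall>v\<in>L. B *\<^sub>v v \<in> L"
  have "\<exists>c \<in> carrier_vec d. B *\<^sub>v col S k = S *\<^sub>v c" if k: "k < d" for k
  proof -
    have "col S k \<in> L" unfolding L col_eq_mult_mat_vec_unit_vec[OF S k] by auto
    then show ?thesis using stable unfolding L by auto
  qed
  then obtain c where c: "\<And>k. k < d \<Longrightarrow> c k \<in> carrier_vec d \<and> B *\<^sub>v col S k = S *\<^sub>v c k"
    by metis
  define T where "T = mat d d (\<lambda>(i, k). c k $ i)"
  have T: "T \<in> carrier_mat d d" unfolding T_def by simp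
  have "col T k = c k" if "k < d" for k
    unfolding T_def using c[OF that] that by (auto simp: col_mat)
  then have "B * S = S * T"
    using B S T c by (intro mat_col_eqI) auto
  with T show "\<exists>T \<in> carrier_mat d d. B * S = S * T" ..
next
  assume "\<exists>T \<in> carrier_mat d d. B * S = S * T"
  then obtain T where T: "T \<in> carrier_mat d d" and BST: "B * S = S * T" by blast
  show "\<forall>v\<in>L. B *\<^sub>v v \<in> L"
  proof
    fix v assume "v \<in> L"
    then obtain x where x: "x \<in> carrier_vec d" "v = S *\<^sub>v x" unfolding L by auto
    have "B *\<^sub>v v = (B * S) *\<^sub>v x" unfolding x(2) using B S x(1) by (simp add: assoc_mult_mat_vec)
    also have "\<dots> = S *\<^sub>v (T *\<^sub>v x)" unfolding BST using S T x(1) by (simp add: assoc_mult_mat_vec)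
    finally show "B *\<^sub>v v \<in> L" unfolding L using T x(1) by auto
  qed
qed

lemma integral_conjugate_iff_commute:
  fixes S B T :: "int mat" and Sinv :: "rat mat"
  assumes S: "S \<in> carrier_mat d d" and B: "B \<in> carrier_mat d d" and T: "T \<in> carrier_mat d d"
    and Sinv: "mat_inverse (map_mat rat_of_int S) = Some Sinv"
  shows "map_mat rat_of_int T = Sinv * map_mat rat_of_int B * map_mat rat_of_int S \<longleftrightarrow> B * S = S * T"
proof -
  define SQ where "SQ = map_mat rat_of_int S"
  define BQ where "BQ = map_mat rat_of_int B"
  define TQ where "TQ = map_mat rat_of_int T"
  have SQ: "SQ \<in> carrier_mat d d" and BQ: "BQ \<in> carrier_mat d d" and TQ: "TQ \<in> carrier_mat d d"
    using S B T by (simp_all add: SQ_def BQ_def TQ_def)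
  have inv: "SQ * Sinv = 1\<^sub>m d" "Sinv * SQ = 1\<^sub>m d" "Sinv \<in> carrier_mat d d"
    using mat_inverse(2)[OF SQ Sinv[folded SQ_def]] by auto
  have hom: "map_mat rat_of_int (B * S) = BQ * SQ" "map_mat rat_of_int (S * T) = SQ * TQ"
    unfolding SQ_def BQ_def TQ_def using S B T by (simp_all add: of_int_hom.mat_hom_mult)
  show ?thesis unfolding SQ_def[symmetric] BQ_def[symmetric] TQ_def[symmetric]
  proof
    assume "TQ = Sinv * BQ * SQ"
    then have "SQ * TQ = (SQ * Sinv) * (BQ * SQ)"
      using SQ BQ inv(3) by (simp add: assoc_mult_mat[of _ d d _ d _ d])
    then have "map_mat rat_of_int (S * T) = map_mat rat_of_int (B * S)"
      using hom BQ SQ inv(1) by simp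
    then have "S * T = B * S" by (rule of_int_hom.mat_hom_inj)
    then show "B * S = S * T" ..
  next
    assume "B * S = S * T"
    then have "SQ * TQ = BQ * SQ" using hom by simp
    then have "(Sinv * SQ) * TQ = Sinv * (BQ * SQ)"
      using SQ TQ inv(3) by (simp add: assoc_mult_mat[of _ d d _ d _ d])
    then show "TQ = Sinv * BQ * SQ"
      using TQ BQ SQ inv by (simp add: assoc_mult_mat[of _ d d _ d _ d])
  qed
qed

lemma mat_inverse_exists:
  fixes S :: "int mat"
  assumes S: "S \<in> carrier_mat d d" and dS: "det S \<noteq> 0"
  obtains Sinv where "mat_inverse (map_mat rat_of_int S) = Some Sinv"
proof -
  have SQ: "map_mat rat_of_int S \<in> carrier_mat d d" using S by simp
  have "det (map_mat rat_of_int S) \<noteq> 0" using dS by (simp add: of_int_hom.hom_det)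
  then have "map_mat rat_of_int S \<in> Units (ring_mat TYPE(rat) d d)" by (rule det_non_zero_imp_unit[OF SQ])
  then show ?thesis
    using mat_inverse(1)[OF SQ, where b = d] that by (cases "mat_inverse (map_mat rat_of_int S)") auto
qed

lemma coset_eq_image: "coset L x = (\<lambda>l. x + l) ` L"
  unfolding coset_def by auto

(* A nonzero w orthogonal to L separates the cosets of the multiples of a unit vector. *)
lemma det_nonzero_if_finite_cosets:
  fixes S :: "int mat"
  assumes S: "S \<in> carrier_mat d d" and L: "L = {S *\<^sub>v c | c. c \<in> carrier_vec d}"
    and fin: "finite (coset L ` carrier_vec d)"
  shows "det S \<noteq> 0"
proof
  assume "det S = 0"
  then have "det (transpose_mat S) = 0" using det_transpose[OF S] by simp
  then obtain w where w: "w \<in> carrier_vec d" "w \<noteq> 0\<^sub>v d" "transpose_mat S *\<^sub>v w = 0\<^sub>v d"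
    using det_0_iff_vec_prod_zero[of "transpose_mat S" d] S by auto
  have wL: "w \<bullet> l = 0" if "l \<in> L" for l
  proof -
    obtain c where c: "c \<in> carrier_vec d" "l = S *\<^sub>v c" using \<open>l \<in> L\<close> L by auto
    have "w \<bullet> l = (transpose_mat S *\<^sub>v w) \<bullet> c"
      unfolding c(2) by (rule transpose_vec_mult_scalar[OF S c(1) w(1), symmetric])
    then show ?thesis using w(3) c(1) by simp
  qed
  obtain i where i: "i < d" "w $ i \<noteq> 0" using w(1,2) by (metis eq_vecI carrier_vecD index_zero_vec)
  define e :: "nat \<Rightarrow> int vec" where "e m = of_nat m \<cdot>\<^sub>v unit_vec d i" for m
  have e: "e m \<in> carrier_vec d" for m unfolding e_def by simp
  have we: "w \<bullet> e m = of_nat m * w $ i" for m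
    unfolding e_def using w(1) i(1) by simp
  have "inj (\<lambda>m. coset L (e m))"
  proof (rule injI)
    fix a b assume "coset L (e a) = coset L (e b)"
    moreover have "e a \<in> coset L (e a)"
      using zero_in_column_lattice[OF S] e[of a] unfolding L coset_eq_image
      by (intro image_eqI[where x = "0\<^sub>v d"]) auto
    ultimately obtain l where l: "l \<in> L" "e a = e b + l" unfolding coset_eq_image by auto
    have "w \<bullet> e a = w \<bullet> e b + w \<bullet> l"
      unfolding l(2) using w(1) e column_lattice_subset[OF S] l(1) L
      by (intro scalar_prod_add_distrib) auto
    then have "of_nat a * w $ i = of_nat b * w $ i" using wL[OF l(1)] we by simp
    then show "a = b" using i(2) by simp
  qed
  moreover have "range (\<lambda>m. coset L (e m)) \<subseteq> coset L ` carrier_vec d" using e by auto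
  ultimately have "finite (UNIV :: nat set)" using fin by (meson finite_imageD finite_subset)
  then show False by simp
qed

lemma affine_image_coset:
  fixes A :: "int mat"
  assumes A: "A \<in> carrier_mat d d" and AL: "(*\<^sub>v) A ` L = L" and L: "L \<subseteq> carrier_vec d"
    and x: "x \<in> carrier_vec d" and y: "y \<in> carrier_vec d"
  shows "(\<lambda>z. A *\<^sub>v z + y) ` coset L x = coset L (A *\<^sub>v x + y)"
proof -
  have "A *\<^sub>v (x + l) + y = (A *\<^sub>v x + y) + A *\<^sub>v l" if "l \<in> L" for l
    using that L A x y unfolding mult_add_distrib_mat_vec[OF A x subsetD[OF L that]]
    by (intro eq_vecI) auto
  then have "(\<lambda>z. A *\<^sub>v z + y) ` coset L x = (\<lambda>m. (A *\<^sub>v x + y) + m) ` (*\<^sub>v) A ` L"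
    unfolding coset_eq_image image_image by (rule image_cong[OF HOL.refl])
  then show ?thesis unfolding AL coset_eq_image .
qed

lemma DN_carrier: "A \<in> DN n \<Longrightarrow> A \<in> carrier_mat (totient n) (totient n)"
  by (induction rule: DN.induct) (auto intro: mult_carrier_mat phi1_mat_carrier phi2_mat_carrier)

lemma image_mult_mat_vec_mult:
  assumes "P \<in> carrier_mat d d" "A \<in> carrier_mat d d" "L \<subseteq> carrier_vec d"
  shows "(*\<^sub>v) (P * A) ` L = (*\<^sub>v) P ` (*\<^sub>v) A ` L"
  unfolding image_image using assms by (intro image_cong[OF HOL.refl] assoc_mult_mat_vec) auto

lemma DN_image_eq:
  assumes "A \<in> DN n" and L: "L \<subseteq> Lam n"
    and phi1_L: "(*\<^sub>v) (phi1_mat n) ` L = L" and phi2_L: "(*\<^sub>v) (phi2_mat n) ` L = L"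
  shows "(*\<^sub>v) A ` L = L"
  using assms(1)
proof (induction rule: DN.induct)
  case one
  have "1\<^sub>m (totient n) *\<^sub>v v = v" if "v \<in> L" for v using that L unfolding Lam_def by auto
  then show ?case by simp
next
  case (rot A)
  then show ?case using L unfolding Lam_def
    by (simp add: image_mult_mat_vec_mult[OF phi1_mat_carrier DN_carrier] phi1_L)
next
  case (refl A)
  then show ?case using L unfolding Lam_def
    by (simp add: image_mult_mat_vec_mult[OF phi2_mat_carrier DN_carrier] phi2_L)
qed

lemma colorH_eq_symG_if_DN_generators_stable:
  assumes L: "L \<subseteq> Lam n"
    and phi1_L: "(*\<^sub>v) (phi1_mat n) ` L = L" and phi2_L: "(*\<^sub>v) (phi2_mat n) ` L = L"
  shows "colorH n L = symG n"
proof
  show "colorH n L \<subseteq> symG n" unfolding colorH_def by auto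
  show "symG n \<subseteq> colorH n L"
  proof
    fix g assume g: "g \<in> symG n"
    then obtain A y where gA: "g = (\<lambda>x. A *\<^sub>v x + y)" and A: "A \<in> DN n" and y: "y \<in> Lam n"
      unfolding symG_def by blast
    have "g ` coset L x = coset L (A *\<^sub>v x + y)" if "x \<in> Lam n" for x
      unfolding gA
      by (rule affine_image_coset[OF DN_carrier[OF A] DN_image_eq[OF A L phi1_L phi2_L]])
        (use L that y in \<open>auto simp: Lam_def\<close>)
    moreover have "A *\<^sub>v x + y \<in> Lam n" if "x \<in> Lam n" for x
      using that y DN_carrier[OF A] unfolding Lam_def by simp
    ultimately show "g \<in> colorH n L" using g unfolding colorH_def by blast
  qed
qed

lemma coset_zero:
  assumes "L \<subseteq> carrier_vec d"
  shows "coset L (0\<^sub>v d) = L"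
proof -
  have "(\<lambda>l. 0\<^sub>v d + l) ` L = (\<lambda>l. l) ` L" by (rule image_cong) (use assms in auto)
  then show ?thesis unfolding coset_eq_image by simp
qed

(* 0 lies in the image, so the coset is L itself. *)
lemma mult_mat_vec_stable_if_image_in_coset:
  fixes B :: "int mat"
  assumes B: "B \<in> carrier_mat d d" and L: "L \<subseteq> carrier_vec d" "0\<^sub>v d \<in> L"
    and diff: "\<And>a b. a \<in> L \<Longrightarrow> b \<in> L \<Longrightarrow> a - b \<in> L"
    and image: "(*\<^sub>v) B ` L \<subseteq> coset L x"
  shows "\<forall>v\<in>L. B *\<^sub>v v \<in> L"
proof
  fix v assume v: "v \<in> L"
  have "B *\<^sub>v v \<in> coset L x" "B *\<^sub>v 0\<^sub>v d \<in> coset L x" using image v L(2) by auto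
  moreover have "B *\<^sub>v 0\<^sub>v d = 0\<^sub>v d" using B by (auto intro!: eq_vecI simp: scalar_prod_def)
  ultimately obtain l1 l0 where l: "l1 \<in> L" "l0 \<in> L" "B *\<^sub>v v = x + l1" "0\<^sub>v d = x + l0"
    unfolding coset_eq_image by auto
  have lC: "l1 \<in> carrier_vec d" "l0 \<in> carrier_vec d" using l(1,2) L(1) by auto
  have "B *\<^sub>v v = l1 - l0"
  proof (rule eq_vecI)
    fix i assume "i < dim_vec (l1 - l0)"
    then have i: "i < dim_vec l1" "i < dim_vec l0" using lC by auto
    have "(B *\<^sub>v v) $ i = x $ i + l1 $ i" using arg_cong[OF l(3), of "\<lambda>u. u $ i"] i by simp
    moreover have "0 = x $ i + l0 $ i" using arg_cong[OF l(4), of "\<lambda>u. u $ i"] i lC by simp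
    ultimately show "(B *\<^sub>v v) $ i = (l1 - l0) $ i" using i by simp
  qed (use lC B in auto)
  then show "B *\<^sub>v v \<in> L" using diff[OF l(1,2)] by simp
qed

lemma phi2_stable_if_colorH_eq_symG:
  assumes H: "colorH n L = symG n" and L: "L \<subseteq> Lam n" "0\<^sub>v (totient n) \<in> L"
    and diff: "\<And>a b. a \<in> L \<Longrightarrow> b \<in> L \<Longrightarrow> a - b \<in> L"
  shows "\<forall>v\<in>L. phi2_mat n *\<^sub>v v \<in> L"
proof -
  let ?B = "phi2_mat n" and ?d = "totient n"
  have LC: "L \<subseteq> carrier_vec ?d" using L(1) unfolding Lam_def .
  define g where "g = (\<lambda>x. (?B * 1\<^sub>m ?d) *\<^sub>v x + 0\<^sub>v ?d)"
  have "?B * 1\<^sub>m ?d \<in> DN n" by (rule DN.refl[OF DN.one])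
  moreover have "0\<^sub>v ?d \<in> Lam n" unfolding Lam_def by simp
  ultimately have "g \<in> symG n"
    unfolding g_def symG_def by (intro CollectI exI[of _ "?B * 1\<^sub>m ?d"] exI[of _ "0\<^sub>v ?d"]) simp
  then have "\<forall>x\<in>Lam n. \<exists>x'\<in>Lam n. g ` coset L x = coset L x'" using H unfolding colorH_def by auto
  then obtain x' where "g ` coset L (0\<^sub>v ?d) = coset L x'" using \<open>0\<^sub>v ?d \<in> Lam n\<close> by blast
  moreover have "g ` coset L (0\<^sub>v ?d) = (*\<^sub>v) ?B ` L"
    unfolding coset_zero[OF LC] g_def using LC phi2_mat_carrier[of n]
    by (intro image_cong) (auto dest: subsetD)
  ultimately have "(*\<^sub>v) ?B ` L \<subseteq> coset L x'" by simp
  then show ?thesis using mult_mat_vec_stable_if_image_in_coset[OF phi2_mat_carrier LC L(2) diff] by blast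
qed

lemma colorH_eq_symG_iff:
  assumes n: "n > 0" and L: "L \<subseteq> Lam n" "0\<^sub>v (totient n) \<in> L"
    and diff: "\<And>a b. a \<in> L \<Longrightarrow> b \<in> L \<Longrightarrow> a - b \<in> L"
    and rot: "(*\<^sub>v) (phi1_mat n) ` L = L"
  shows "colorH n L = symG n \<longleftrightarrow> (\<forall>v\<in>L. phi2_mat n *\<^sub>v v \<in> L)"
proof
  assume "colorH n L = symG n"
  then show "\<forall>v\<in>L. phi2_mat n *\<^sub>v v \<in> L" by (rule phi2_stable_if_colorH_eq_symG[OF _ L diff])
next
  assume stable: "\<forall>v\<in>L. phi2_mat n *\<^sub>v v \<in> L"
  have "(*\<^sub>v) (phi2_mat n) ` L = L"
  proof
    show "(*\<^sub>v) (phi2_mat n) ` L \<subseteq> L" using stable by auto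
    show "L \<subseteq> (*\<^sub>v) (phi2_mat n) ` L"
    proof
      fix v assume v: "v \<in> L"
      then have "v = phi2_mat n *\<^sub>v (phi2_mat n *\<^sub>v v)" using phi2_mat_involution[OF n] L(1) by auto
      moreover have "phi2_mat n *\<^sub>v v \<in> L" using stable v by blast
      ultimately show "v \<in> (*\<^sub>v) (phi2_mat n) ` L" by (rule image_eqI)
    qed
  qed
  then show "colorH n L = symG n" by (rule colorH_eq_symG_if_DN_generators_stable[OF L(1) rot])
qed

theorem corollary3p1p3:
  fixes n :: nat and \<alpha> :: complex and I :: "complex set" and L :: "int vec set" and S :: "int mat"
  assumes hn: "n \<in> pid_cyclotomic_indices"
    and h\<alpha>: "\<alpha> \<in> Mring n"
    and hI: "I = (\<lambda>m. \<alpha> * m) ` Mring n"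
    and hL: "L = {v \<in> Lam n. emb n v \<in> I}"
    and hfin: "finite (coset L ` Lam n)"
    and hS: "S \<in> carrier_mat (totient n) (totient n)"
    and hSL: "L = {S *\<^sub>v c | c. c \<in> Lam n}"
  shows "colorH n L = symG n \<longleftrightarrow>
    (\<exists>Sinv T. mat_inverse (map_mat rat_of_int S) = Some Sinv \<and>
       T \<in> carrier_mat (totient n) (totient n) \<and>
       map_mat rat_of_int T = Sinv * map_mat rat_of_int (phi2_mat n) * map_mat rat_of_int S)"
proof -
  have n: "n > 0" using hn by (auto simp: pid_cyclotomic_indices_def)
  have L: "L = {S *\<^sub>v c | c. c \<in> carrier_vec (totient n)}" using hSL by (simp add: Lam_def)
  have "colorH n L = symG n \<longleftrightarrow> (\<forall>v\<in>L. phi2_mat n *\<^sub>v v \<in> L)"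
  proof (rule colorH_eq_symG_iff[OF n])
    show "L \<subseteq> Lam n" unfolding L Lam_def by (rule column_lattice_subset[OF hS])
    show "0\<^sub>v (totient n) \<in> L" unfolding L by (rule zero_in_column_lattice[OF hS])
    show "a - b \<in> L" if "a \<in> L" "b \<in> L" for a b
      using that unfolding L by (rule diff_in_column_lattice[OF hS])
    show "(*\<^sub>v) (phi1_mat n) ` L = L"
      unfolding hL hI by (rule phi1_mat_image_ideal_lattice[OF n])
  qed
  also have "\<dots> \<longleftrightarrow> (\<exists>T \<in> carrier_mat (totient n) (totient n). phi2_mat n * S = S * T)"
    by (rule column_lattice_stable_iff[OF hS phi2_mat_carrier L])
  also have "\<dots> \<longleftrightarrow> (\<exists>Sinv T. mat_inverse (map_mat rat_of_int S) = Some Sinv \<and>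
       T \<in> carrier_mat (totient n) (totient n) \<and>
       map_mat rat_of_int T = Sinv * map_mat rat_of_int (phi2_mat n) * map_mat rat_of_int S)"
  proof -
    have "det S \<noteq> 0" using det_nonzero_if_finite_cosets[OF hS L] hfin by (simp add: Lam_def)
    then obtain Sinv where Sinv: "mat_inverse (map_mat rat_of_int S) = Some Sinv"
      by (rule mat_inverse_exists[OF hS])
    show ?thesis using integral_conjugate_iff_commute[OF hS phi2_mat_carrier _ Sinv] Sinv by auto
  qed
  finally show ?thesis .
qed

end
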